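(* Let $N\ge1$, $\mathbf{M}=\mathrm{diag}(m_0,\dots,m_N)$ arbitrary real diagonal, $\mathbf{m}=(m_0,\dots,m_N)^\top$, and let $\mathbf{Q}_N$ be the tridiagonal matrix with $(\mathbf{Q}_N)_{kk}=-N$, $(\mathbf{Q}_N)_{k+1,k}=N-k$, $(\mathbf{Q}_N)_{k-1,k}=k$ (indices $0,\dots,N$) and zeros elsewhere. Let $\mathbf{C}$ be the $(N+1)\times(N+1)$ matrix with entries $c_{ik}$ defined by $\sum_{i=0}^N c_{ik}t^i=(1-t)^k(1+t)^{N-k}$ (so its columns are eigenvectors of $\mathbf{Q}_N$ and $\mathbf{C}^{-1}=2^{-N}\mathbf{C}$). For $\mu>0$ let $\mathbf{p}(\mu)\in S_{N+1}$ be the positive solution of $(\mathbf{M}+\mu\mathbf{Q}_N)\mathbf{p}=\overline{m}\,\mathbf{p}$ with $\overline{m}=\mathbf{m}\cdot\mathbf{p}$, and put $\mathbf{x}(\mu)=\mathbf{C}^{-1}\mathbf{p}(\mu)$. Let $\hat{\mathbf{x}}=2^{-N}(1,0,\dots,0)^\top$. Then for all $\mu>0$, $$\|\mathbf{x}(\mu)-\hat{\mathbf{x}}\|_1\le\frac{1}{\mu}\|\mathbf{M}\|_1,$$ and for all $\mu$ with $2\mu>(2^{N+1}+1)\|\mathbf{M}\|_1$, $$\|\mathbf{x}'(\mu)\|_1\le\frac{2N}{2\mu-(2^{N+1}+1)\|\mathbf{M}\|_1}.$$ In particular $\lim_{\mu\to\infty}\mathbf{x}(\mu)=\hat{\mathbf{x}}$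 and $\lim_{\mu\to\infty}\mathbf{x}'(\mu)=0$.
   Context: $S_{N+1}=\{\mathbf{p}\in\mathbb{R}^{N+1}:\mathbf{p}\ge0,\ \sum_i p_i=1\}$. $\mathbf{p}(\mu)$ is the normalized Perron eigenvector of $\mathbf{M}+\mu\mathbf{Q}_N$ for its dominant eigenvalue $\overline{m}(\mu)$. $\|\cdot\|_1$ is the $\ell^1$ norm on vectors and the induced operator norm on matrices (for diagonal $\mathbf{M}$, $\|\mathbf{M}\|_1=\max_k|m_k|$). Primes denote derivatives with respect to $\mu$. *)

theory Defs
  imports "HOL-Analysis.Analysis" "HOL-Computational_Algebra.Polynomial"
begin

text \<open>Vectors and matrices indexed by 0..N are represented as functions on nat
  (only indices \<le> N matter).\<close>

definition Qmat :: "nat \<Rightarrow> nat \<Rightarrow> nat \<Rightarrow> real" where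
  "Qmat N i j = (if i = j then - real N
                 else if i = j + 1 then real N - real j
                 else if i + 1 = j then real j
                 else 0)"

definition Cmat :: "nat \<Rightarrow> nat \<Rightarrow> nat \<Rightarrow> real" where
  "Cmat N i k = coeff ([:1, -1:] ^ k * [:1, 1:] ^ (N - k)) i"

text \<open>x = C^{-1} p, using C^{-1} = 2^{-N} C.\<close>
definition xvec :: "nat \<Rightarrow> (nat \<Rightarrow> real) \<Rightarrow> nat \<Rightarrow> real" where
  "xvec N p i = (1 / 2 ^ N) * (\<Sum>k\<le>N. Cmat N i k * p k)"

definition norm1 :: "nat \<Rightarrow> (nat \<Rightarrow> real) \<Rightarrow> real" where
  "norm1 N v = (\<Sum>k\<le>N. \<bar>v k\<bar>)"

text \<open>Induced l1 operator norm of diag(m_0..m_N) = max |m_k|.\<close>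
definition Mnorm1 :: "nat \<Rightarrow> (nat \<Rightarrow> real) \<Rightarrow> real" where
  "Mnorm1 N m = Max ((\<lambda>k. \<bar>m k\<bar>) ` {..N})"

definition xhat :: "nat \<Rightarrow> nat \<Rightarrow> real" where
  "xhat N i = (if i = 0 then 1 / 2 ^ N else 0)"

end

theory Submission
  imports Defs "HOL-Real_Asymp.Real_Asymp"
begin

text \<open>The columns of the Krawtchouk matrix C are eigenvectors of Q_N with eigenvalues -2k,
  C^2 = 2^N I, and C/2^N does not increase the l1 norm. In the coordinates x = C^-1 p the
  eigenvalue equation therefore reads 2k \<mu> x_k = (C^-1 (M - m\<cdot>p) p)_k for k \<ge> 1, while
  x_0 = 2^-N because the first row of C consists of ones; this gives the first bound.
  Subtracting the equations at two parameters a, b gives an estimate of the same shape for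
  x(a) - x(b), so x is Lipschitz where 2\<mu> > (2^(N+1) + 1) |M|; applied once more to
  difference quotients it shows that these are Cauchy, hence x is differentiable there, and the
  Lipschitz bound passes to the derivative.\<close>

lemma tendsto_exists_at_if_cauchy_bound:
  fixes f :: "real \<Rightarrow> 'a::complete_space"
  assumes r: "r > 0" and c: "c \<ge> 0"
    and bound: "\<And>a b. a \<noteq> x \<Longrightarrow> \<bar>a - x\<bar> < r \<Longrightarrow> b \<noteq> x \<Longrightarrow> \<bar>b - x\<bar> < r
       \<Longrightarrow> dist (f a) (f b) \<le> c * (\<bar>a - x\<bar> + \<bar>b - x\<bar>)"
  shows "\<exists>L. (f \<longlongrightarrow> L) (at x)"
proof -
  have "cauchy_filter (filtermap f (at x))"
    unfolding cauchy_filter_metric_filtermap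
  proof (intro allI impI)
    fix e :: real assume e: "e > 0"
    define d where "d = min r (e / (2 * c + 1))"
    have d: "0 < d" "d \<le> r" using r e c by (simp_all add: d_def)
    have "(2 * c + 1) * d \<le> (2 * c + 1) * (e / (2 * c + 1))"
      using c by (intro mult_left_mono) (simp_all add: d_def)
    moreover have "(2 * c + 1) * d = 2 * c * d + d" by (simp add: algebra_simps)
    ultimately have de: "2 * c * d < e" using c d by simp
    show "\<exists>P. eventually P (at x) \<and> (\<forall>a b. P a \<and> P b \<longrightarrow> dist (f a) (f b) < e)"
    proof (intro exI conjI allI impI)
      show "eventually (\<lambda>a. a \<noteq> x \<and> \<bar>a - x\<bar> < d) (at x)"
        unfolding eventually_at using d by (auto simp: dist_real_def)
      fix a b assume ab: "(a \<noteq> x \<and> \<bar>a - x\<bar> < d) \<and> (b \<noteq> x \<and> \<bar>b - x\<bar> < d)"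
      then have "dist (f a) (f b) \<le> c * (\<bar>a - x\<bar> + \<bar>b - x\<bar>)" using d by (intro bound) auto
      also have "\<dots> \<le> c * (2 * d)" using ab c by (intro mult_left_mono) auto
      finally show "dist (f a) (f b) < e" using de by simp
    qed
  qed
  then obtain L where "filtermap f (at x) \<le> nhds L"
    using cauchy_filter_convergent by (auto simp: convergent_filter_iff)
  then show ?thesis unfolding filterlim_def by blast
qed

section \<open>The Krawtchouk matrix\<close>

definition kraw_poly :: "nat \<Rightarrow> nat \<Rightarrow> real poly" where
  "kraw_poly N k = [:1, -1:] ^ k * [:1, 1:] ^ (N - k)"

lemma Cmat_eq_coeff_kraw_poly: "Cmat N i k = coeff (kraw_poly N k) i"
  by (simp add: Cmat_def kraw_poly_def)

lemma poly_kraw_poly: "poly (kraw_poly N k) s = (1 - s) ^ k * (1 + s) ^ (N - k)"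
  by (simp add: kraw_poly_def)

lemma degree_kraw_poly:
  assumes "k \<le> N"
  shows "degree (kraw_poly N k) \<le> N"
proof -
  have "degree (kraw_poly N k) \<le> degree ([:1, -1::real:] ^ k) + degree ([:1, 1::real:] ^ (N - k))"
    unfolding kraw_poly_def by (rule degree_mult_le)
  also have "\<dots> \<le> k * 1 + (N - k) * 1"
    by (intro add_mono order.trans[OF degree_power_le]) auto
  finally show ?thesis using assms by simp
qed

lemma Cmat_0_left: "Cmat N 0 k = 1"
  by (simp add: Cmat_eq_coeff_kraw_poly kraw_poly_def coeff_mult coeff_0_power)

lemma poly_eq_sum_coeff_atMost:
  fixes p :: "'a::comm_semiring_1 poly"
  assumes "degree p \<le> n"
  shows "poly p x = (\<Sum>i\<le>n. coeff p i * x ^ i)"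
proof -
  have "poly p x = (\<Sum>i\<le>degree p. coeff p i * x ^ i)" by (rule poly_altdef)
  also have "\<dots> = (\<Sum>i\<le>n. coeff p i * x ^ i)"
    using assms by (intro sum.mono_neutral_left) (auto simp: coeff_eq_0 not_le)
  finally show ?thesis .
qed

lemma poly_eqI_except_point:
  fixes p q :: "'a::{idom, ring_char_0} poly"
  assumes "\<And>s. s \<noteq> a \<Longrightarrow> poly p s = poly q s"
  shows "p = q"
proof (rule ccontr)
  assume "p \<noteq> q"
  then have "finite {s. poly (p - q) s = 0}" by (intro poly_roots_finite) simp
  moreover have "UNIV - {a} \<subseteq> {s. poly (p - q) s = 0}" using assms by auto
  ultimately have "finite (UNIV - {a})" by (rule rev_finite_subset)
  then show False by (simp add: infinite_UNIV_char_0)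
qed

text \<open>The substitution t \<mapsto> (1 - t)/(1 + t) turns (1 - t)^j (1 + t)^(N - j) into
  2^N t^j / (1 + t)^N.\<close>

lemma sum_smult_kraw_poly:
  assumes j: "j \<le> N"
  shows "(\<Sum>k\<le>N. smult (coeff (kraw_poly N j) k) (kraw_poly N k)) = smult (2 ^ N) (monom 1 j)"
proof (rule poly_eqI_except_point)
  fix s :: real assume "s \<noteq> -1"
  then have s1: "1 + s \<noteq> 0" by (metis add.commute add_eq_0_iff)
  define u where "u = (1 - s) / (1 + s)"
  have "poly (\<Sum>k\<le>N. smult (coeff (kraw_poly N j) k) (kraw_poly N k)) s
      = (\<Sum>k\<le>N. coeff (kraw_poly N j) k * ((1 - s) ^ k * (1 + s) ^ (N - k)))"
    by (simp add: poly_sum poly_kraw_poly)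
  also have "\<dots> = (\<Sum>k\<le>N. (1 + s) ^ N * (coeff (kraw_poly N j) k * u ^ k))"
  proof (rule sum.cong[OF refl])
    fix k assume "k \<in> {..N}"
    then have "(1 + s) ^ N = (1 + s) ^ k * (1 + s) ^ (N - k)"
      by (simp add: power_add[symmetric])
    then show "coeff (kraw_poly N j) k * ((1 - s) ^ k * (1 + s) ^ (N - k))
        = (1 + s) ^ N * (coeff (kraw_poly N j) k * u ^ k)"
      using s1 by (simp add: u_def power_divide field_simps)
  qed
  also have "\<dots> = (1 + s) ^ N * poly (kraw_poly N j) u"
    by (simp add: sum_distrib_left poly_eq_sum_coeff_atMost[OF degree_kraw_poly[OF j]])
  also have "\<dots> = (1 + s) ^ N * ((2 * s / (1 + s)) ^ j * (2 / (1 + s)) ^ (N - j))"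
    using s1 by (simp add: poly_kraw_poly u_def field_simps)
  also have "\<dots> = 2 ^ N * s ^ j"
  proof -
    have "(1 + s) ^ N = (1 + s) ^ j * (1 + s) ^ (N - j)" "(2::real) ^ N = 2 ^ j * 2 ^ (N - j)"
      using j by (simp_all add: power_add[symmetric])
    then show ?thesis using s1 by (simp add: power_divide power_mult_distrib field_simps)
  qed
  finally show "poly (\<Sum>k\<le>N. smult (coeff (kraw_poly N j) k) (kraw_poly N k)) s
      = poly (smult (2 ^ N) (monom 1 j)) s"
    by (simp add: poly_monom)
qed

definition Cmul :: "nat \<Rightarrow> (nat \<Rightarrow> real) \<Rightarrow> nat \<Rightarrow> real" where
  "Cmul N v i = (\<Sum>k\<le>N. Cmat N i k * v k)"

lemma xvec_eq_Cmul: "xvec N v k = Cmul N v k / 2 ^ N"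
  by (simp add: xvec_def Cmul_def)

lemma Cmul_cong: "(\<And>k. k \<le> N \<Longrightarrow> v k = w k) \<Longrightarrow> Cmul N v i = Cmul N w i"
  unfolding Cmul_def by (intro sum.cong) auto

lemma Cmul_add: "Cmul N (\<lambda>i. f i + g i) k = Cmul N f k + Cmul N g k"
  by (simp add: Cmul_def algebra_simps sum.distrib)

lemma Cmul_diff: "Cmul N (\<lambda>i. f i - g i) k = Cmul N f k - Cmul N g k"
  by (simp add: Cmul_def algebra_simps sum_subtractf)

lemma Cmul_scale: "Cmul N (\<lambda>i. a * f i) k = a * Cmul N f k"
  by (simp add: Cmul_def algebra_simps sum_distrib_left)

lemma Cmul_divide: "Cmul N (\<lambda>i. f i / c) k = Cmul N f k / c"
  by (simp add: Cmul_def sum_divide_distrib)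

lemma Cmul_Cmul:
  assumes "i \<le> N"
  shows "Cmul N (Cmul N v) i = 2 ^ N * v i"
proof -
  have "Cmul N (Cmul N v) i = (\<Sum>k\<le>N. \<Sum>j\<le>N. Cmat N i k * (Cmat N k j * v j))"
    by (simp add: Cmul_def sum_distrib_left)
  also have "\<dots> = (\<Sum>j\<le>N. v j * (\<Sum>k\<le>N. coeff (kraw_poly N j) k * coeff (kraw_poly N k) i))"
    by (subst sum.swap) (simp add: sum_distrib_left Cmat_eq_coeff_kraw_poly mult_ac)
  also have "\<dots> = (\<Sum>j\<le>N. v j * coeff (\<Sum>k\<le>N. smult (coeff (kraw_poly N j) k) (kraw_poly N k)) i)"
    by (simp add: coeff_sum)
  also have "\<dots> = (\<Sum>j\<le>N. v j * (if j = i then 2 ^ N else 0))"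
    by (intro sum.cong refl) (simp add: sum_smult_kraw_poly)
  also have "\<dots> = 2 ^ N * v i"
    using assms by (simp add: if_distrib cong: if_cong)
  finally show ?thesis .
qed

definition Qop :: "nat \<Rightarrow> real poly \<Rightarrow> real poly" where
  "Qop N P = smult (- real N) ([:1, -1:] * P) + [:1, 0, -1:] * pderiv P"

lemma sum_Qmat_mult:
  assumes i: "i \<le> N"
  shows "(\<Sum>j\<le>N. Qmat N i j * w j) = - real N * w i
     + (if i = 0 then 0 else (real N - real (i - 1)) * w (i - 1))
     + (if i < N then real (i + 1) * w (i + 1) else 0)"
proof -
  have e: "Qmat N i j * w j = (if j = i then - real N * w i else 0)
     + (if j = i - 1 \<and> i \<noteq> 0 then (real N - real (i - 1)) * w (i - 1) else 0)
     + (if j = i + 1 then real (i + 1) * w (i + 1) else 0)" for j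
    unfolding Qmat_def by (cases "j = i"; cases "i = j + 1"; cases "i + 1 = j") auto
  show ?thesis
    unfolding e sum.distrib using i by (simp add: sum.delta' conj_commute) linarith
qed

lemma coeff_Qop:
  assumes d: "degree P \<le> N" and i: "i \<le> N"
  shows "coeff (Qop N P) i = (\<Sum>j\<le>N. Qmat N i j * coeff P j)"
proof -
  have top: "coeff P (i + 1) = 0" if "\<not> i < N" using that i d by (intro coeff_eq_0) simp
  show ?thesis
  proof (cases i)
    case 0
    then show ?thesis using top sum_Qmat_mult[OF i] by (simp add: Qop_def coeff_pderiv)
  next
    case (Suc n)
    then show ?thesis using top sum_Qmat_mult[OF i]
      by (cases n) (auto simp: Qop_def coeff_pderiv algebra_simps of_nat_diff)
  qed
qed

lemma linear_mult_pderiv_power: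
  "[:c, d:] * pderiv ([:c, d:] ^ k) = smult (of_nat k * d) ([:c, d:] ^ k :: 'a::idom poly)"
proof (cases k)
  case (Suc n)
  then show ?thesis
    by (simp add: pderiv_power_Suc pderiv_pCons del: power_Suc) (simp add: algebra_simps)
qed simp

lemma Qop_kraw_poly:
  assumes "k \<le> N"
  shows "Qop N (kraw_poly N k) = smult (- 2 * real k) (kraw_poly N k)"
proof -
  let ?A = "[:1, -1::real:]" and ?B = "[:1, 1::real:]"
  have "[:1, 0, -1:] * pderiv (kraw_poly N k)
      = ?B * ?B ^ (N - k) * (?A * pderiv (?A ^ k)) + ?A * ?A ^ k * (?B * pderiv (?B ^ (N - k)))"
    by (simp add: kraw_poly_def pderiv_mult algebra_simps)
  also have "\<dots> = smult (real (N - k)) (?A * kraw_poly N k) - smult (real k) (?B * kraw_poly N k)"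
    unfolding linear_mult_pderiv_power kraw_poly_def by (simp add: mult_ac del: mult_pCons_left)
  finally have key: "[:1, 0, -1:] * pderiv (kraw_poly N k)
      = smult (real (N - k)) (?A * kraw_poly N k) - smult (real k) (?B * kraw_poly N k)" .
  have "poly (Qop N (kraw_poly N k)) s = poly (smult (- 2 * real k) (kraw_poly N k)) s" for s
  proof -
    have "poly (Qop N (kraw_poly N k)) s
        = - real N * poly (?A * kraw_poly N k) s + poly ([:1, 0, -1:] * pderiv (kraw_poly N k)) s"
      by (simp add: Qop_def)
    also have "\<dots> = poly (smult (- 2 * real k) (kraw_poly N k)) s"
      unfolding key using assms by (simp add: of_nat_diff algebra_simps)
    finally show ?thesis .
  qed
  then show ?thesis by (intro poly_eq_poly_eq_iff[THEN iffD1] ext)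
qed

lemma Qmat_Cmul:
  assumes i: "i \<le> N"
  shows "(\<Sum>j\<le>N. Qmat N i j * Cmul N v j) = Cmul N (\<lambda>k. - 2 * real k * v k) i"
proof -
  have "(\<Sum>j\<le>N. Qmat N i j * Cmul N v j)
      = (\<Sum>k\<le>N. v k * (\<Sum>j\<le>N. Qmat N i j * coeff (kraw_poly N k) j))"
    unfolding Cmul_def Cmat_eq_coeff_kraw_poly sum_distrib_left
    by (subst sum.swap) (simp add: mult_ac)
  also have "\<dots> = (\<Sum>k\<le>N. v k * coeff (Qop N (kraw_poly N k)) i)"
    by (intro sum.cong refl) (simp add: coeff_Qop[OF degree_kraw_poly i])
  also have "\<dots> = Cmul N (\<lambda>k. - 2 * real k * v k) i"
    unfolding Cmul_def Cmat_eq_coeff_kraw_poly by (intro sum.cong refl) (simp add: Qop_kraw_poly)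
  finally show ?thesis .
qed

lemma Cmul_Qmat:
  assumes k: "k \<le> N"
  shows "Cmul N (\<lambda>i. \<Sum>j\<le>N. Qmat N i j * v j) k = - 2 * real k * Cmul N v k"
proof -
  define w where "w l = Cmul N v l / 2 ^ N" for l
  have v: "v j = Cmul N w j" if "j \<le> N" for j
  proof -
    have "Cmul N w j = Cmul N (Cmul N v) j / 2 ^ N"
      unfolding w_def by (rule Cmul_divide)
    then show ?thesis using Cmul_Cmul[OF that] by simp
  qed
  have Qv: "(\<Sum>j\<le>N. Qmat N i j * v j) = Cmul N (\<lambda>l. - 2 * real l * w l) i" if "i \<le> N" for i
  proof -
    have "(\<Sum>j\<le>N. Qmat N i j * v j) = (\<Sum>j\<le>N. Qmat N i j * Cmul N w j)"
      by (intro sum.cong) (simp_all add: v)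
    also have "\<dots> = Cmul N (\<lambda>l. - 2 * real l * w l) i" by (rule Qmat_Cmul[OF that])
    finally show ?thesis .
  qed
  have "Cmul N (\<lambda>i. \<Sum>j\<le>N. Qmat N i j * v j) k = Cmul N (Cmul N (\<lambda>l. - 2 * real l * w l)) k"
    by (intro Cmul_cong Qv)
  also have "\<dots> = - 2 * real k * Cmul N v k"
    by (simp add: Cmul_Cmul[OF k] w_def)
  finally show ?thesis .
qed

definition majorizes :: "real poly \<Rightarrow> real poly \<Rightarrow> bool" where
  "majorizes P p \<longleftrightarrow> (\<forall>i. \<bar>coeff p i\<bar> \<le> coeff P i)"

lemma majorizes_mult:
  assumes "majorizes P p" and "majorizes Q q"
  shows "majorizes (P * Q) (p * q)"
  unfolding majorizes_def
proof
  fix n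
  have "\<bar>coeff (p * q) n\<bar> \<le> (\<Sum>i\<le>n. \<bar>coeff p i\<bar> * \<bar>coeff q (n - i)\<bar>)"
    unfolding coeff_mult abs_mult[symmetric] by (rule sum_abs)
  also have "\<dots> \<le> (\<Sum>i\<le>n. coeff P i * coeff Q (n - i))"
    using assms unfolding majorizes_def
    by (intro sum_mono mult_mono) (auto intro: order_trans[OF abs_ge_zero])
  finally show "\<bar>coeff (p * q) n\<bar> \<le> coeff (P * Q) n" by (simp add: coeff_mult)
qed

lemma majorizes_power:
  assumes "majorizes P p"
  shows "majorizes (P ^ n) (p ^ n)"
proof (induction n)
  case 0
  show ?case by (simp add: majorizes_def coeff_1)
next
  case (Suc n)
  then show ?case by (simp add: assms majorizes_mult)
qed

lemma majorizes_linear: "\<bar>c\<bar> \<le> a \<Longrightarrow> \<bar>d\<bar> \<le> b \<Longrightarrow> majorizes [:a, b:] [:c, d:]"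
  unfolding majorizes_def by (auto simp: coeff_pCons split: nat.splits)

lemma sum_abs_Cmat_column:
  assumes "k \<le> N"
  shows "(\<Sum>i\<le>N. \<bar>Cmat N i k\<bar>) \<le> 2 ^ N"
proof -
  have "majorizes ([:1, 1:] ^ k * [:1, 1:] ^ (N - k)) (kraw_poly N k)"
    unfolding kraw_poly_def by (intro majorizes_mult majorizes_power majorizes_linear) auto
  moreover have "[:1, 1::real:] ^ k * [:1, 1:] ^ (N - k) = [:1, 1:] ^ N"
    using assms by (simp add: power_add[symmetric])
  ultimately have "(\<Sum>i\<le>N. \<bar>Cmat N i k\<bar>) \<le> (\<Sum>i\<le>N. coeff ([:1, 1::real:] ^ N) i * 1 ^ i)"
    unfolding majorizes_def Cmat_eq_coeff_kraw_poly by (intro sum_mono) auto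
  also have "\<dots> = poly ([:1, 1::real:] ^ N) 1"
    by (rule poly_eq_sum_coeff_atMost[symmetric]) (rule order.trans[OF degree_power_le], simp)
  finally show ?thesis by simp
qed

lemma sum_abs_Cmul_le: "(\<Sum>k\<le>N. \<bar>Cmul N v k\<bar>) \<le> 2 ^ N * (\<Sum>i\<le>N. \<bar>v i\<bar>)"
proof -
  have "(\<Sum>k\<le>N. \<bar>Cmul N v k\<bar>) \<le> (\<Sum>k\<le>N. \<Sum>i\<le>N. \<bar>Cmat N k i\<bar> * \<bar>v i\<bar>)"
    unfolding Cmul_def by (intro sum_mono order.trans[OF sum_abs]) (simp add: abs_mult)
  also have "\<dots> = (\<Sum>i\<le>N. \<bar>v i\<bar> * (\<Sum>k\<le>N. \<bar>Cmat N k i\<bar>))"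
    by (subst sum.swap) (simp add: sum_distrib_left mult_ac)
  also have "\<dots> \<le> (\<Sum>i\<le>N. \<bar>v i\<bar> * 2 ^ N)"
    by (intro sum_mono mult_left_mono sum_abs_Cmat_column) auto
  finally show ?thesis by (simp add: sum_distrib_left mult_ac)
qed

lemma sum_abs_xvec_le: "(\<Sum>k\<le>N. \<bar>xvec N v k\<bar>) \<le> (\<Sum>i\<le>N. \<bar>v i\<bar>)"
  using sum_abs_Cmul_le[of N v]
  by (simp add: xvec_eq_Cmul sum_divide_distrib[symmetric] divide_le_eq mult_ac)

lemma sum_atMost_split_first: "(\<Sum>k\<le>(N::nat). f k) = f 0 + (\<Sum>k\<in>{1..N}. f k)"
proof -
  have "{..N} = insert 0 {1..N}" by (auto simp: Suc_le_eq)
  then show ?thesis by simp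
qed

lemma sum_abs_Cmul_le_from_1:
  assumes "v 0 = 0"
  shows "(\<Sum>k\<le>N. \<bar>Cmul N v k\<bar>) \<le> 2 ^ N * (\<Sum>k\<in>{1..N}. \<bar>v k\<bar>)"
  using sum_abs_Cmul_le[of N v] assms by (simp add: sum_atMost_split_first[where N = N])

lemma abs_le_norm1: "k \<le> N \<Longrightarrow> \<bar>v k\<bar> \<le> norm1 N v"
  unfolding norm1_def by (rule member_le_sum[where f = "\<lambda>i. \<bar>v i\<bar>"]) auto

section \<open>The perturbed equation in Krawtchouk coordinates\<close>

lemma abs_le_Mnorm1: "i \<le> N \<Longrightarrow> \<bar>m i\<bar> \<le> Mnorm1 N m"
  unfolding Mnorm1_def by (intro Max_ge) auto

lemma Mnorm1_nonneg: "0 \<le> Mnorm1 N m"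
  using abs_le_Mnorm1[where i = 0 and N = N and m = m] by simp

lemma abs_sum_mult_le_Mnorm1: "\<bar>\<Sum>i\<le>N. m i * u i\<bar> \<le> Mnorm1 N m * (\<Sum>i\<le>N. \<bar>u i\<bar>)"
proof -
  have "\<bar>\<Sum>i\<le>N. m i * u i\<bar> \<le> (\<Sum>i\<le>N. \<bar>m i\<bar> * \<bar>u i\<bar>)"
    by (rule order.trans[OF sum_abs]) (simp add: abs_mult)
  also have "\<dots> \<le> (\<Sum>i\<le>N. Mnorm1 N m * \<bar>u i\<bar>)"
    by (intro sum_mono mult_right_mono abs_le_Mnorm1) auto
  finally show ?thesis by (simp add: sum_distrib_left)
qed

lemma sum_abs_xvec_mult_le:
  "(\<Sum>k\<le>N. \<bar>xvec N (\<lambda>i. (m i - c) * u i) k\<bar>) \<le> (Mnorm1 N m + \<bar>c\<bar>) * (\<Sum>i\<le>N. \<bar>u i\<bar>)"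
proof -
  have "(\<Sum>k\<le>N. \<bar>xvec N (\<lambda>i. (m i - c) * u i) k\<bar>) \<le> (\<Sum>i\<le>N. \<bar>(m i - c) * u i\<bar>)"
    by (rule sum_abs_xvec_le)
  also have "\<dots> \<le> (\<Sum>i\<le>N. (Mnorm1 N m + \<bar>c\<bar>) * \<bar>u i\<bar>)"
  proof (intro sum_mono)
    fix i assume "i \<in> {..N}"
    then have "\<bar>m i - c\<bar> \<le> Mnorm1 N m + \<bar>c\<bar>" using abs_le_Mnorm1[where i = i and N = N and m = m] by auto
    then show "\<bar>(m i - c) * u i\<bar> \<le> (Mnorm1 N m + \<bar>c\<bar>) * \<bar>u i\<bar>"
      unfolding abs_mult by (rule mult_right_mono) auto
  qed
  finally show ?thesis by (simp add: sum_distrib_left)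
qed

lemma xvec_mult_diff:
  "xvec N (\<lambda>i. (m i - c) * (f i - g i)) k
     = xvec N (\<lambda>i. (m i - c') * f i) k + (c' - c) * xvec N f k - xvec N (\<lambda>i. (m i - c) * g i) k"
proof -
  have "Cmul N (\<lambda>i. (m i - c) * (f i - g i)) k
      = Cmul N (\<lambda>i. ((m i - c') * f i + (c' - c) * f i) - (m i - c) * g i) k"
    by (intro Cmul_cong) (simp add: algebra_simps)
  then show ?thesis
    by (simp add: xvec_eq_Cmul Cmul_diff Cmul_add Cmul_scale diff_divide_distrib add_divide_distrib)
qed

lemma abs_le_from_scaled_identity:
  fixes k b y A B z C R :: real
  assumes k: "1 \<le> k" and b: "0 < b" and eq: "2 * k * b * y = A - B * z - 2 * k * C - R"
  shows "2 * b * \<bar>y\<bar> \<le> \<bar>A\<bar> + \<bar>B\<bar> * \<bar>z\<bar> + 2 * \<bar>C\<bar> + \<bar>R\<bar>"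
proof -
  have "k * (2 * b * \<bar>y\<bar>) = \<bar>A - B * z - 2 * k * C - R\<bar>"
    using k b eq[symmetric] by (simp add: abs_mult)
  also have "\<dots> \<le> \<bar>A\<bar> + \<bar>B\<bar> * \<bar>z\<bar> + k * (2 * \<bar>C\<bar>) + \<bar>R\<bar>"
  proof -
    have "\<bar>A - P - Q - R\<bar> \<le> \<bar>A\<bar> + \<bar>P\<bar> + \<bar>Q\<bar> + \<bar>R\<bar>" for P Q by arith
    moreover have "\<bar>2 * k * C\<bar> = k * (2 * \<bar>C\<bar>)" using k by (simp add: abs_mult)
    ultimately show ?thesis by (metis abs_mult)
  qed
  also have "\<dots> \<le> k * (\<bar>A\<bar> + \<bar>B\<bar> * \<bar>z\<bar> + 2 * \<bar>C\<bar> + \<bar>R\<bar>)"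
    using mult_right_mono[OF k, of "\<bar>A\<bar> + \<bar>B\<bar> * \<bar>z\<bar> + \<bar>R\<bar>"] by (simp add: algebra_simps)
  finally show ?thesis using k by simp
qed

text \<open>In both applications below (the Lipschitz bound and the convergence of difference
  quotients) y is a perturbation of x with y_0 = 0, u = C y the corresponding perturbation of p,
  and z is x at a parameter \<mu> with 2\<mu> > (2^(N+1) + 1) |M|, where x is small.\<close>

lemma perturbation_estimate:
  fixes N :: nat and m y u z C R :: "nat \<Rightarrow> real" and b c :: real
  defines "M \<equiv> Mnorm1 N m"
  assumes b: "0 < b" and c: "\<bar>c\<bar> \<le> M"
    and u: "(\<Sum>i\<le>N. \<bar>u i\<bar>) \<le> 2 ^ N * (\<Sum>k\<in>{1..N}. \<bar>y k\<bar>)"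
    and z: "2 ^ N * M * (\<Sum>k\<in>{1..N}. \<bar>z k\<bar>) \<le> M"
    and eq: "\<And>k. k \<in> {1..N} \<Longrightarrow> 2 * real k * b * y k = xvec N (\<lambda>i. (m i - c) * u i) k
        - (\<Sum>i\<le>N. m i * u i) * z k - 2 * real k * C k - R k"
  shows "(2 * b - (2 ^ (N + 1) + 1) * M) * (\<Sum>k\<in>{1..N}. \<bar>y k\<bar>)
     \<le> 2 * (\<Sum>k\<in>{1..N}. \<bar>C k\<bar>) + (\<Sum>k\<in>{1..N}. \<bar>R k\<bar>)"
proof -
  define Y where "Y = (\<Sum>k\<in>{1..N}. \<bar>y k\<bar>)"
  define X where "X k = xvec N (\<lambda>i. (m i - c) * u i) k" for k
  define B where "B = (\<Sum>i\<le>N. m i * u i)"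
  have "2 * b * \<bar>y k\<bar> \<le> \<bar>X k\<bar> + \<bar>B\<bar> * \<bar>z k\<bar> + 2 * \<bar>C k\<bar> + \<bar>R k\<bar>" if "k \<in> {1..N}" for k
    using that by (intro abs_le_from_scaled_identity[of "real k", OF _ b]) (auto simp: eq X_def B_def)
  then have "2 * b * Y \<le> (\<Sum>k\<in>{1..N}. \<bar>X k\<bar> + \<bar>B\<bar> * \<bar>z k\<bar> + 2 * \<bar>C k\<bar> + \<bar>R k\<bar>)"
    unfolding Y_def sum_distrib_left by (intro sum_mono)
  also have "\<dots> = (\<Sum>k\<in>{1..N}. \<bar>X k\<bar>) + \<bar>B\<bar> * (\<Sum>k\<in>{1..N}. \<bar>z k\<bar>)
      + 2 * (\<Sum>k\<in>{1..N}. \<bar>C k\<bar>) + (\<Sum>k\<in>{1..N}. \<bar>R k\<bar>)"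
    by (simp add: sum.distrib sum_distrib_left)
  finally have main: "2 * b * Y \<le> (\<Sum>k\<in>{1..N}. \<bar>X k\<bar>) + \<bar>B\<bar> * (\<Sum>k\<in>{1..N}. \<bar>z k\<bar>)
      + 2 * (\<Sum>k\<in>{1..N}. \<bar>C k\<bar>) + (\<Sum>k\<in>{1..N}. \<bar>R k\<bar>)" .
  have "(\<Sum>k\<in>{1..N}. \<bar>X k\<bar>) \<le> (\<Sum>k\<le>N. \<bar>X k\<bar>)" by (intro sum_mono2) auto
  also have "\<dots> \<le> (M + \<bar>c\<bar>) * (\<Sum>i\<le>N. \<bar>u i\<bar>)"
    unfolding X_def M_def by (rule sum_abs_xvec_mult_le)
  also have "\<dots> \<le> (2 * M) * (2 ^ N * Y)"
    using c u unfolding Y_def by (intro mult_mono) (auto intro: sum_nonneg)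
  finally have X: "(\<Sum>k\<in>{1..N}. \<bar>X k\<bar>) \<le> 2 * M * (2 ^ N * Y)" .
  have "\<bar>B\<bar> * (\<Sum>k\<in>{1..N}. \<bar>z k\<bar>) \<le> (M * (2 ^ N * Y)) * (\<Sum>k\<in>{1..N}. \<bar>z k\<bar>)"
    unfolding B_def M_def
    using abs_sum_mult_le_Mnorm1[where N = N and m = m and u = u] u Mnorm1_nonneg[where N = N and m = m]
    unfolding Y_def by (intro mult_right_mono) (auto intro: sum_nonneg order.trans mult_left_mono)
  also have "\<dots> = Y * (2 ^ N * M * (\<Sum>k\<in>{1..N}. \<bar>z k\<bar>))" by (simp add: mult_ac)
  also have "\<dots> \<le> Y * M" using z unfolding Y_def by (intro mult_left_mono) (auto intro: sum_nonneg)
  finally have "\<bar>B\<bar> * (\<Sum>k\<in>{1..N}. \<bar>z k\<bar>) \<le> Y * M" .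
  then show ?thesis using main X unfolding Y_def by (simp add: algebra_simps)
qed

section \<open>The family of normalized Perron eigenvectors\<close>

locale perron_family =
  fixes N :: nat and m :: "nat \<Rightarrow> real" and p :: "real \<Rightarrow> nat \<Rightarrow> real"
  assumes p_pos: "\<And>\<mu> k. 0 < \<mu> \<Longrightarrow> k \<le> N \<Longrightarrow> 0 < p \<mu> k"
    and p_sum: "\<And>\<mu>. 0 < \<mu> \<Longrightarrow> (\<Sum>k\<le>N. p \<mu> k) = 1"
    and p_eigen: "\<And>\<mu> i. 0 < \<mu> \<Longrightarrow> i \<le> N \<Longrightarrow>
      m i * p \<mu> i + \<mu> * (\<Sum>j\<le>N. Qmat N i j * p \<mu> j) = (\<Sum>j\<le>N. m j * p \<mu> j) * p \<mu> i"
begin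

abbreviation x :: "real \<Rightarrow> nat \<Rightarrow> real" where
  "x \<mu> \<equiv> xvec N (p \<mu>)"

abbreviation mbar :: "real \<Rightarrow> real" where
  "mbar \<mu> \<equiv> \<Sum>j\<le>N. m j * p \<mu> j"

abbreviation K :: real where
  "K \<equiv> (2 ^ (N + 1) + 1) * Mnorm1 N m"

lemma sum_abs_p: "0 < \<mu> \<Longrightarrow> (\<Sum>i\<le>N. \<bar>p \<mu> i\<bar>) = 1"
  using p_sum p_pos by (simp add: abs_of_pos)

lemma abs_mbar_le: "0 < \<mu> \<Longrightarrow> \<bar>mbar \<mu>\<bar> \<le> Mnorm1 N m"
  using abs_sum_mult_le_Mnorm1[where N = N and m = m and u = "p \<mu>"] by (simp add: sum_abs_p)

lemma x_0: "0 < \<mu> \<Longrightarrow> x \<mu> 0 = 1 / 2 ^ N"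
  by (simp add: xvec_def Cmat_0_left p_sum)

lemma p_eq_Cmul_x:
  assumes "0 < \<mu>" and i: "i \<le> N"
  shows "p \<mu> i = Cmul N (x \<mu>) i"
proof -
  have "Cmul N (x \<mu>) i = Cmul N (\<lambda>k. Cmul N (p \<mu>) k / 2 ^ N) i"
    by (rule Cmul_cong) (simp add: xvec_eq_Cmul)
  also have "\<dots> = p \<mu> i" by (simp add: Cmul_divide Cmul_Cmul[OF i])
  finally show ?thesis by simp
qed

lemma x_equation:
  assumes \<mu>: "0 < \<mu>" and k: "k \<le> N"
  shows "2 * real k * \<mu> * x \<mu> k = xvec N (\<lambda>i. (m i - mbar \<mu>) * p \<mu> i) k"
proof -
  have "Cmul N (\<lambda>i. m i * p \<mu> i + \<mu> * (\<Sum>j\<le>N. Qmat N i j * p \<mu> j)) k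
      = Cmul N (\<lambda>i. mbar \<mu> * p \<mu> i) k"
    using p_eigen[OF \<mu>] by (intro Cmul_cong) simp
  then have "Cmul N (\<lambda>i. m i * p \<mu> i) k - 2 * real k * \<mu> * Cmul N (p \<mu>) k
      = mbar \<mu> * Cmul N (p \<mu>) k"
    by (simp add: Cmul_add Cmul_scale Cmul_Qmat[OF k]) (simp add: mult_ac)
  moreover have "Cmul N (\<lambda>i. (m i - mbar \<mu>) * p \<mu> i) k
      = Cmul N (\<lambda>i. m i * p \<mu> i) k - mbar \<mu> * Cmul N (p \<mu>) k"
    by (simp add: left_diff_distrib Cmul_diff Cmul_scale)
  ultimately show ?thesis by (simp add: xvec_eq_Cmul field_simps)
qed

lemma sum_abs_x_le:
  assumes \<mu>: "0 < \<mu>"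
  shows "(\<Sum>k\<in>{1..N}. \<bar>x \<mu> k\<bar>) \<le> Mnorm1 N m / \<mu>"
proof -
  define X where "X k = xvec N (\<lambda>i. (m i - mbar \<mu>) * p \<mu> i) k" for k
  have "2 * \<mu> * \<bar>x \<mu> k\<bar> \<le> \<bar>X k\<bar>" if "k \<in> {1..N}" for k
    using abs_le_from_scaled_identity[of "real k" \<mu> "x \<mu> k" "X k" 0 0 0 0]
      x_equation[OF \<mu>, of k] that \<mu> by (simp add: X_def)
  then have "2 * \<mu> * (\<Sum>k\<in>{1..N}. \<bar>x \<mu> k\<bar>) \<le> (\<Sum>k\<in>{1..N}. \<bar>X k\<bar>)"
    unfolding sum_distrib_left by (intro sum_mono)
  also have "\<dots> \<le> (\<Sum>k\<le>N. \<bar>X k\<bar>)" by (intro sum_mono2) auto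
  also have "\<dots> \<le> (Mnorm1 N m + \<bar>mbar \<mu>\<bar>) * (\<Sum>i\<le>N. \<bar>p \<mu> i\<bar>)"
    unfolding X_def by (rule sum_abs_xvec_mult_le)
  also have "\<dots> \<le> 2 * Mnorm1 N m"
    using abs_mbar_le[OF \<mu>] by (simp add: sum_abs_p[OF \<mu>])
  finally show ?thesis using \<mu> by (simp add: field_simps)
qed

lemma norm1_x_minus_xhat_le:
  assumes "0 < \<mu>"
  shows "norm1 N (\<lambda>i. x \<mu> i - xhat N i) \<le> Mnorm1 N m / \<mu>"
  using sum_abs_x_le[OF assms]
  by (simp add: norm1_def sum_atMost_split_first[where N = N] x_0[OF assms] xhat_def)

lemma K_less_twice:
  assumes "K < 2 * a"
  shows "0 < a" and "2 ^ N * Mnorm1 N m \<le> a"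
proof -
  have "0 \<le> 2 ^ N * Mnorm1 N m" by (simp add: Mnorm1_nonneg)
  moreover have "2 * (2 ^ N * Mnorm1 N m) \<le> K" by (simp add: Mnorm1_nonneg algebra_simps)
  ultimately show "0 < a" and "2 ^ N * Mnorm1 N m \<le> a" using assms by linarith+
qed

lemma sum_abs_x_small:
  assumes a: "K < 2 * a"
  shows "2 ^ N * Mnorm1 N m * (\<Sum>k\<in>{1..N}. \<bar>x a k\<bar>) \<le> Mnorm1 N m"
    and "(\<Sum>k\<in>{1..N}. \<bar>x a k\<bar>) \<le> 1"
proof -
  have a0: "0 < a" and aM: "2 ^ N * Mnorm1 N m \<le> a" using K_less_twice[OF a] by auto
  have "2 ^ N * Mnorm1 N m * (\<Sum>k\<in>{1..N}. \<bar>x a k\<bar>) \<le> 2 ^ N * Mnorm1 N m * (Mnorm1 N m / a)"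
    using sum_abs_x_le[OF a0] by (intro mult_left_mono) (simp_all add: Mnorm1_nonneg)
  also have "\<dots> = Mnorm1 N m * (2 ^ N * Mnorm1 N m / a)" by simp
  also have "\<dots> \<le> Mnorm1 N m"
    using aM a0 by (intro mult_left_le) (simp_all add: Mnorm1_nonneg)
  finally show "2 ^ N * Mnorm1 N m * (\<Sum>k\<in>{1..N}. \<bar>x a k\<bar>) \<le> Mnorm1 N m" .
  have "1 * Mnorm1 N m \<le> 2 ^ N * Mnorm1 N m"
    by (intro mult_right_mono) (simp_all add: Mnorm1_nonneg)
  then have "Mnorm1 N m / a \<le> 1" using aM a0 by simp
  then show "(\<Sum>k\<in>{1..N}. \<bar>x a k\<bar>) \<le> 1"
    using sum_abs_x_le[OF a0] by linarith
qed

definition xdist :: "real \<Rightarrow> real \<Rightarrow> real" where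
  "xdist a b = (\<Sum>k\<in>{1..N}. \<bar>x a k - x b k\<bar>)"

lemma xdist_triangle: "xdist a b \<le> xdist a c + xdist b c"
  unfolding xdist_def sum.distrib[symmetric] by (intro sum_mono) auto

lemma x_diff_equation:
  assumes a: "0 < a" and b: "0 < b" and k: "k \<le> N"
  shows "2 * real k * b * (x a k - x b k) = xvec N (\<lambda>i. (m i - mbar b) * (p a i - p b i)) k
      - (\<Sum>i\<le>N. m i * (p a i - p b i)) * x a k - 2 * real k * ((a - b) * x a k)"
proof -
  have mdiff: "(\<Sum>i\<le>N. m i * (p a i - p b i)) = mbar a - mbar b"
    by (simp add: right_diff_distrib sum_subtractf)
  show ?thesis
    unfolding mdiff xvec_mult_diff[where c' = "mbar a"]
      x_equation[OF a k, symmetric] x_equation[OF b k, symmetric]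
    by (simp add: algebra_simps)
qed

lemma sum_abs_p_diff_le:
  assumes "0 < a" and "0 < b"
  shows "(\<Sum>i\<le>N. \<bar>p a i - p b i\<bar>) \<le> 2 ^ N * xdist a b"
proof -
  have "(\<Sum>i\<le>N. \<bar>p a i - p b i\<bar>) = (\<Sum>i\<le>N. \<bar>Cmul N (\<lambda>k. x a k - x b k) i\<bar>)"
    using p_eq_Cmul_x assms by (intro sum.cong) (auto simp: Cmul_diff)
  also have "\<dots> \<le> 2 ^ N * xdist a b"
    unfolding xdist_def using assms by (intro sum_abs_Cmul_le_from_1) (simp add: x_0)
  finally show ?thesis .
qed

lemma xdist_lipschitz:
  assumes a: "K < 2 * a" and b: "K < 2 * b"
  shows "(2 * b - K) * xdist a b \<le> 2 * \<bar>a - b\<bar>"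
proof -
  have a0: "0 < a" and b0: "0 < b" using K_less_twice a b by auto
  have "(2 * b - K) * xdist a b \<le> 2 * (\<Sum>k\<in>{1..N}. \<bar>(a - b) * x a k\<bar>) + (\<Sum>k\<in>{1..N}. \<bar>0::real\<bar>)"
    unfolding xdist_def
  proof (rule perturbation_estimate[where u = "\<lambda>i. p a i - p b i" and z = "x a" and c = "mbar b"])
    show "(\<Sum>i\<le>N. \<bar>p a i - p b i\<bar>) \<le> 2 ^ N * (\<Sum>k\<in>{1..N}. \<bar>x a k - x b k\<bar>)"
      using sum_abs_p_diff_le[OF a0 b0] unfolding xdist_def .
    show "2 * real k * b * (x a k - x b k) = xvec N (\<lambda>i. (m i - mbar b) * (p a i - p b i)) k
      - (\<Sum>i\<le>N. m i * (p a i - p b i)) * x a k - 2 * real k * ((a - b) * x a k) - 0"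
      if "k \<in> {1..N}" for k
      using x_diff_equation[OF a0 b0] that by simp
  qed (use b0 abs_mbar_le[OF b0] sum_abs_x_small(1)[OF a] in auto)
  also have "\<dots> \<le> 2 * \<bar>a - b\<bar> * 1"
    using sum_abs_x_small(2)[OF a]
    by (simp add: abs_mult sum_distrib_left[symmetric] mult.assoc mult_left_le)
  finally show ?thesis by simp
qed

definition x_quot :: "real \<Rightarrow> real \<Rightarrow> nat \<Rightarrow> real" where
  "x_quot \<mu> \<nu> k = (x \<nu> k - x \<mu> k) / (\<nu> - \<mu>)"

definition p_quot :: "real \<Rightarrow> real \<Rightarrow> nat \<Rightarrow> real" where
  "p_quot \<mu> \<nu> i = (p \<nu> i - p \<mu> i) / (\<nu> - \<mu>)"

lemma x_quot_0: "0 < a \<Longrightarrow> 0 < b \<Longrightarrow> x_quot b a 0 = 0"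
  by (simp add: x_quot_def x_0)

lemma p_quot_eq_Cmul:
  assumes "0 < a" and "0 < b" and "i \<le> N"
  shows "p_quot b a i = Cmul N (x_quot b a) i"
proof -
  have "Cmul N (x_quot b a) i = (Cmul N (x a) i - Cmul N (x b) i) / (a - b)"
    unfolding x_quot_def[abs_def] by (simp only: Cmul_divide Cmul_diff)
  then show ?thesis
    using p_eq_Cmul_x[OF assms(1,3)] p_eq_Cmul_x[OF assms(2,3)] by (simp add: p_quot_def)
qed

lemma x_quot_equation:
  assumes a: "0 < a" and b: "0 < b" and ab: "a \<noteq> b" and k: "k \<le> N"
  shows "2 * real k * b * x_quot b a k = xvec N (\<lambda>i. (m i - mbar b) * p_quot b a i) k
      - (\<Sum>i\<le>N. m i * p_quot b a i) * x a k - 2 * real k * x a k"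
proof -
  have X: "xvec N (\<lambda>i. (m i - mbar b) * p_quot b a i) k
      = xvec N (\<lambda>i. (m i - mbar b) * (p a i - p b i)) k / (a - b)"
    unfolding p_quot_def xvec_def by (simp add: sum_divide_distrib[symmetric])
  have S: "(\<Sum>i\<le>N. m i * p_quot b a i) = (\<Sum>i\<le>N. m i * (p a i - p b i)) / (a - b)"
    unfolding p_quot_def by (simp add: sum_divide_distrib[symmetric])
  have "2 * real k * b * x_quot b a k = 2 * real k * b * (x a k - x b k) / (a - b)"
    by (simp add: x_quot_def)
  also have "\<dots> = (xvec N (\<lambda>i. (m i - mbar b) * (p a i - p b i)) k
      - (\<Sum>i\<le>N. m i * (p a i - p b i)) * x a k - 2 * real k * ((a - b) * x a k)) / (a - b)"
    by (simp only: x_diff_equation[OF a b k])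
  also have "\<dots> = xvec N (\<lambda>i. (m i - mbar b) * (p a i - p b i)) k / (a - b)
      - ((\<Sum>i\<le>N. m i * (p a i - p b i)) / (a - b)) * x a k - 2 * real k * x a k"
  proof -
    have "(A - B * z - c * (h * z)) / h = A / h - (B / h) * z - c * z" if "h \<noteq> 0" for A B z c h :: real
      using that by (simp add: field_simps)
    then show ?thesis using ab by simp
  qed
  finally show ?thesis unfolding X S .
qed

lemma sum_abs_x_quot_le:
  assumes a: "K < 2 * a" and b: "K < 2 * b" and ab: "a \<noteq> b"
  shows "(\<Sum>k\<in>{1..N}. \<bar>x_quot b a k\<bar>) \<le> 2 / (2 * b - K)"
proof -
  have "(\<Sum>k\<in>{1..N}. \<bar>x_quot b a k\<bar>) = xdist a b / \<bar>a - b\<bar>"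
    unfolding x_quot_def xdist_def by (simp add: sum_divide_distrib abs_divide)
  also have "\<dots> \<le> 2 / (2 * b - K)"
    using xdist_lipschitz[OF a b] b ab by (simp add: divide_le_eq le_divide_eq mult.commute)
  finally show ?thesis .
qed

lemma x_quot_cauchy:
  assumes \<mu>: "K < 2 * \<mu>" and a: "K < 2 * a" and b: "K < 2 * b"
    and a\<mu>: "a \<noteq> \<mu>" and b\<mu>: "b \<noteq> \<mu>"
  shows "(2 * \<mu> - K) * (\<Sum>k\<in>{1..N}. \<bar>x_quot \<mu> a k - x_quot \<mu> b k\<bar>)
     \<le> (2 + 2 ^ (N + 1) * Mnorm1 N m / (2 * \<mu> - K)) * xdist a b"
proof -
  have a0: "0 < a" and b0: "0 < b" and \<mu>0: "0 < \<mu>" using K_less_twice a b \<mu> by auto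
  define S where "S = (\<Sum>i\<le>N. m i * p_quot \<mu> b i)"
  have "(2 * \<mu> - K) * (\<Sum>k\<in>{1..N}. \<bar>x_quot \<mu> a k - x_quot \<mu> b k\<bar>)
     \<le> 2 * (\<Sum>k\<in>{1..N}. \<bar>x a k - x b k\<bar>) + (\<Sum>k\<in>{1..N}. \<bar>S * (x a k - x b k)\<bar>)"
  proof (rule perturbation_estimate[where u = "\<lambda>i. p_quot \<mu> a i - p_quot \<mu> b i"
        and z = "x a" and c = "mbar \<mu>"])
    have "(\<Sum>i\<le>N. \<bar>p_quot \<mu> a i - p_quot \<mu> b i\<bar>)
        = (\<Sum>i\<le>N. \<bar>Cmul N (\<lambda>k. x_quot \<mu> a k - x_quot \<mu> b k) i\<bar>)"
      using p_quot_eq_Cmul[OF a0 \<mu>0] p_quot_eq_Cmul[OF b0 \<mu>0] by (intro sum.cong) (auto simp: Cmul_diff)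
    also have "\<dots> \<le> 2 ^ N * (\<Sum>k\<in>{1..N}. \<bar>x_quot \<mu> a k - x_quot \<mu> b k\<bar>)"
      using a0 b0 \<mu>0 by (intro sum_abs_Cmul_le_from_1) (simp add: x_quot_0)
    finally show "(\<Sum>i\<le>N. \<bar>p_quot \<mu> a i - p_quot \<mu> b i\<bar>)
        \<le> 2 ^ N * (\<Sum>k\<in>{1..N}. \<bar>x_quot \<mu> a k - x_quot \<mu> b k\<bar>)" .
    show "2 * real k * \<mu> * (x_quot \<mu> a k - x_quot \<mu> b k)
      = xvec N (\<lambda>i. (m i - mbar \<mu>) * (p_quot \<mu> a i - p_quot \<mu> b i)) k
      - (\<Sum>i\<le>N. m i * (p_quot \<mu> a i - p_quot \<mu> b i)) * x a k - 2 * real k * (x a k - x b k)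
      - S * (x a k - x b k)" if "k \<in> {1..N}" for k
      using x_quot_equation[OF a0 \<mu>0 a\<mu>, of k] x_quot_equation[OF b0 \<mu>0 b\<mu>, of k] that
      unfolding xvec_mult_diff[where c' = "mbar \<mu>"] S_def
      by (simp add: algebra_simps sum_subtractf)
  qed (use \<mu>0 abs_mbar_le[OF \<mu>0] sum_abs_x_small(1)[OF a] in auto)
  also have "\<dots> = (2 + \<bar>S\<bar>) * xdist a b"
    unfolding xdist_def by (simp add: abs_mult sum_distrib_left[symmetric] distrib_right)
  also have "\<dots> \<le> (2 + 2 ^ (N + 1) * Mnorm1 N m / (2 * \<mu> - K)) * xdist a b"
  proof (intro mult_right_mono add_left_mono)
    have "(\<Sum>i\<le>N. \<bar>p_quot \<mu> b i\<bar>) = (\<Sum>i\<le>N. \<bar>Cmul N (x_quot \<mu> b) i\<bar>)"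
      using p_quot_eq_Cmul[OF b0 \<mu>0] by (intro sum.cong) auto
    also have "\<dots> \<le> 2 ^ N * (\<Sum>k\<in>{1..N}. \<bar>x_quot \<mu> b k\<bar>)"
      using b0 \<mu>0 by (intro sum_abs_Cmul_le_from_1) (simp add: x_quot_0)
    also have "\<dots> \<le> 2 ^ N * (2 / (2 * \<mu> - K))"
      using sum_abs_x_quot_le[OF b \<mu> b\<mu>] by (intro mult_left_mono) simp_all
    finally have "Mnorm1 N m * (\<Sum>i\<le>N. \<bar>p_quot \<mu> b i\<bar>) \<le> Mnorm1 N m * (2 ^ N * (2 / (2 * \<mu> - K)))"
      by (intro mult_left_mono) (simp_all add: Mnorm1_nonneg)
    then show "\<bar>S\<bar> \<le> 2 ^ (N + 1) * Mnorm1 N m / (2 * \<mu> - K)"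
      using abs_sum_mult_le_Mnorm1[where N = N and m = m and u = "p_quot \<mu> b"]
      unfolding S_def by (simp add: mult_ac)
    show "0 \<le> xdist a b" unfolding xdist_def by (auto intro: sum_nonneg)
  qed
  finally show ?thesis .
qed

lemma K_less_twice_near:
  assumes "K < 2 * \<mu>" and "\<bar>a - \<mu>\<bar> < (2 * \<mu> - K) / 4"
  shows "K < 2 * a"
proof -
  have "\<mu> - a \<le> \<bar>a - \<mu>\<bar>" by linarith
  then show ?thesis using assms by (simp add: field_simps)
qed

lemma x_quot_cauchy_near:
  assumes \<mu>: "K < 2 * \<mu>" and k: "k \<le> N"
    and a: "a \<noteq> \<mu>" "\<bar>a - \<mu>\<bar> < (2 * \<mu> - K) / 4"
    and b: "b \<noteq> \<mu>" "\<bar>b - \<mu>\<bar> < (2 * \<mu> - K) / 4"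
  shows "\<bar>x_quot \<mu> a k - x_quot \<mu> b k\<bar>
    \<le> 2 * (2 + 2 ^ (N + 1) * Mnorm1 N m / (2 * \<mu> - K)) / (2 * \<mu> - K)\<^sup>2 * (\<bar>a - \<mu>\<bar> + \<bar>b - \<mu>\<bar>)"
proof -
  define g where "g = 2 * \<mu> - K"
  define c where "c = 2 + 2 ^ (N + 1) * Mnorm1 N m / g"
  have g: "0 < g" using \<mu> by (simp add: g_def)
  then have c: "0 \<le> c" by (simp add: c_def Mnorm1_nonneg)
  have a': "K < 2 * a" and b': "K < 2 * b" using K_less_twice_near[OF \<mu>] a b by auto
  have dist_\<mu>: "xdist d \<mu> \<le> 2 * \<bar>d - \<mu>\<bar> / g" if "K < 2 * d" for d
    using xdist_lipschitz[OF that \<mu>] g by (simp add: g_def pos_le_divide_eq mult.commute)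
  define \<Sigma> where "\<Sigma> = (\<Sum>k\<in>{1..N}. \<bar>x_quot \<mu> a k - x_quot \<mu> b k\<bar>)"
  have "\<bar>x_quot \<mu> a k - x_quot \<mu> b k\<bar> \<le> \<Sigma>"
  proof (cases "k = 0")
    case True
    then show ?thesis using K_less_twice a' b' \<mu> by (simp add: \<Sigma>_def x_quot_0 sum_nonneg)
  next
    case False
    then show ?thesis unfolding \<Sigma>_def using k by (intro member_le_sum) auto
  qed
  moreover have "\<Sigma> \<le> 2 * c / g\<^sup>2 * (\<bar>a - \<mu>\<bar> + \<bar>b - \<mu>\<bar>)"
  proof -
    have "g * \<Sigma> \<le> c * xdist a b"
      using x_quot_cauchy[OF \<mu> a' b' a(1) b(1)] unfolding g_def c_def \<Sigma>_def .
    also have "\<dots> \<le> c * (2 * \<bar>a - \<mu>\<bar> / g + 2 * \<bar>b - \<mu>\<bar> / g)"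
      using xdist_triangle[of a b \<mu>] dist_\<mu>[OF a'] dist_\<mu>[OF b'] c by (intro mult_left_mono) auto
    also have "\<dots> = g * (2 * c / g\<^sup>2 * (\<bar>a - \<mu>\<bar> + \<bar>b - \<mu>\<bar>))"
      using g by (simp add: field_simps power2_eq_square)
    finally show ?thesis using g by (rule mult_left_le_imp_le)
  qed
  ultimately show ?thesis unfolding c_def g_def by (rule order_trans)
qed

lemma x_has_derivative:
  assumes \<mu>: "K < 2 * \<mu>"
  obtains L where "\<And>k. k \<le> N \<Longrightarrow> ((\<lambda>\<nu>. x \<nu> k) has_field_derivative L k) (at \<mu>)"
    and "(\<Sum>k\<le>N. \<bar>L k\<bar>) \<le> 2 / (2 * \<mu> - K)"
proof -
  define r where "r = (2 * \<mu> - K) / 4"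
  have r: "0 < r" using \<mu> by (simp add: r_def)
  define c where "c = 2 * (2 + 2 ^ (N + 1) * Mnorm1 N m / (2 * \<mu> - K)) / (2 * \<mu> - K)\<^sup>2"
  have c: "0 \<le> c" using \<mu> by (simp add: c_def Mnorm1_nonneg)
  have "\<exists>L. ((\<lambda>\<nu>. x_quot \<mu> \<nu> k) \<longlongrightarrow> L) (at \<mu>)" if k: "k \<le> N" for k
  proof (rule tendsto_exists_at_if_cauchy_bound[OF r c])
    fix a b assume "a \<noteq> \<mu>" "\<bar>a - \<mu>\<bar> < r" "b \<noteq> \<mu>" "\<bar>b - \<mu>\<bar> < r"
    then show "dist (x_quot \<mu> a k) (x_quot \<mu> b k) \<le> c * (\<bar>a - \<mu>\<bar> + \<bar>b - \<mu>\<bar>)"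
      unfolding r_def c_def dist_real_def by (rule x_quot_cauchy_near[OF \<mu> k])
  qed
  then obtain L where lim: "\<And>k. k \<le> N \<Longrightarrow> ((\<lambda>\<nu>. x_quot \<mu> \<nu> k) \<longlongrightarrow> L k) (at \<mu>)"
    by metis
  have "eventually (\<lambda>\<nu>. (\<Sum>k\<le>N. \<bar>x_quot \<mu> \<nu> k\<bar>) \<le> 2 / (2 * \<mu> - K)) (at \<mu>)"
    unfolding eventually_at
  proof (intro exI[of _ r] conjI r ballI impI)
    fix \<nu> assume "\<nu> \<in> UNIV" "\<nu> \<noteq> \<mu> \<and> dist \<nu> \<mu> < r"
    then have \<nu>: "K < 2 * \<nu>" "\<nu> \<noteq> \<mu>"
      using K_less_twice_near[OF \<mu>] by (auto simp: r_def dist_real_def)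
    have "(\<Sum>k\<le>N. \<bar>x_quot \<mu> \<nu> k\<bar>) = (\<Sum>k\<in>{1..N}. \<bar>x_quot \<mu> \<nu> k\<bar>)"
      using K_less_twice \<nu>(1) \<mu> by (simp add: sum_atMost_split_first[where N = N] x_quot_0)
    also have "\<dots> \<le> 2 / (2 * \<mu> - K)" using sum_abs_x_quot_le[OF \<nu>(1) \<mu> \<nu>(2)] .
    finally show "(\<Sum>k\<le>N. \<bar>x_quot \<mu> \<nu> k\<bar>) \<le> 2 / (2 * \<mu> - K)" .
  qed
  then have "(\<Sum>k\<le>N. \<bar>L k\<bar>) \<le> 2 / (2 * \<mu> - K)"
    by (intro tendsto_upperbound[OF tendsto_sum[OF tendsto_rabs[OF lim]]]) auto
  moreover have "((\<lambda>\<nu>. x \<nu> k) has_field_derivative L k) (at \<mu>)" if "k \<le> N" for k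
    using lim[OF that] by (simp add: has_field_derivative_iff x_quot_def)
  ultimately show thesis using that by blast
qed

lemma x_differentiable: "K < 2 * \<mu> \<Longrightarrow> k \<le> N \<Longrightarrow> (\<lambda>\<nu>. x \<nu> k) differentiable (at \<mu>)"
  by (metis x_has_derivative real_differentiable_def)

lemma norm1_deriv_x_le:
  assumes "K < 2 * \<mu>"
  shows "norm1 N (\<lambda>k. deriv (\<lambda>\<nu>. x \<nu> k) \<mu>) \<le> 2 / (2 * \<mu> - K)"
proof -
  obtain L where L: "\<And>k. k \<le> N \<Longrightarrow> ((\<lambda>\<nu>. x \<nu> k) has_field_derivative L k) (at \<mu>)"
    and "(\<Sum>k\<le>N. \<bar>L k\<bar>) \<le> 2 / (2 * \<mu> - K)"
    using x_has_derivative[OF assms] by blast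
  then show ?thesis unfolding norm1_def by (simp add: DERIV_imp_deriv[OF L])
qed

lemma x_tendsto_xhat:
  assumes k: "k \<le> N"
  shows "((\<lambda>\<mu>. x \<mu> k) \<longlongrightarrow> xhat N k) at_top"
proof -
  have "((\<lambda>\<mu>. x \<mu> k - xhat N k) \<longlongrightarrow> 0) at_top"
  proof (rule Lim_null_comparison)
    show "eventually (\<lambda>\<mu>. norm (x \<mu> k - xhat N k) \<le> Mnorm1 N m / \<mu>) at_top"
      using eventually_gt_at_top[of 0]
      by eventually_elim (use k norm1_x_minus_xhat_le abs_le_norm1 in \<open>fastforce intro: order_trans\<close>)
    have "((\<lambda>\<mu>. c / \<mu>) \<longlongrightarrow> 0) at_top" for c :: real by real_asymp
    then show "((\<lambda>\<mu>. Mnorm1 N m / \<mu>) \<longlongrightarrow> 0) at_top" .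
  qed
  then show ?thesis by (simp add: LIM_zero_iff)
qed

lemma deriv_x_tendsto_0:
  assumes k: "k \<le> N"
  shows "((\<lambda>\<mu>. deriv (\<lambda>\<nu>. x \<nu> k) \<mu>) \<longlongrightarrow> 0) at_top"
proof (rule Lim_null_comparison)
  show "eventually (\<lambda>\<mu>. norm (deriv (\<lambda>\<nu>. x \<nu> k) \<mu>) \<le> 2 / (2 * \<mu> - K)) at_top"
    using eventually_gt_at_top[of K]
  proof eventually_elim
    case (elim \<mu>)
    moreover have "0 \<le> K" by (simp add: Mnorm1_nonneg)
    ultimately have "K < 2 * \<mu>" by linarith
    then show ?case using k norm1_deriv_x_le abs_le_norm1 by (fastforce intro: order_trans)
  qed
  have "((\<lambda>\<mu>. 2 / (2 * \<mu> - c)) \<longlongrightarrow> 0) at_top" for c :: real by real_asymp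
  then show "((\<lambda>\<mu>. 2 / (2 * \<mu> - K)) \<longlongrightarrow> 0) at_top" .
qed

end

theorem theorem1:
  fixes N :: nat and m :: "nat \<Rightarrow> real" and p :: "real \<Rightarrow> nat \<Rightarrow> real"
  assumes N: "N \<ge> 1"
    and hp: "\<And>\<mu>. \<mu> > 0 \<Longrightarrow>
        (\<forall>k\<le>N. 0 < p \<mu> k) \<and> (\<Sum>k\<le>N. p \<mu> k) = 1 \<and>
        (\<forall>i\<le>N. m i * p \<mu> i + \<mu> * (\<Sum>j\<le>N. Qmat N i j * p \<mu> j)
                 = (\<Sum>j\<le>N. m j * p \<mu> j) * p \<mu> i)"
  shows "(\<forall>\<mu>>0. norm1 N (\<lambda>i. xvec N (p \<mu>) i - xhat N i) \<le> Mnorm1 N m / \<mu>)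
    \<and> (\<forall>\<mu>. 2 * \<mu> > (2 ^ (N + 1) + 1) * Mnorm1 N m \<longrightarrow>
          (\<forall>k\<le>N. (\<lambda>\<nu>. xvec N (p \<nu>) k) differentiable (at \<mu>)) \<and>
          norm1 N (\<lambda>k. deriv (\<lambda>\<nu>. xvec N (p \<nu>) k) \<mu>)
            \<le> 2 * real N / (2 * \<mu> - (2 ^ (N + 1) + 1) * Mnorm1 N m))
    \<and> (\<forall>k\<le>N. ((\<lambda>\<mu>. xvec N (p \<mu>) k) \<longlongrightarrow> xhat N k) at_top)
    \<and> (\<forall>k\<le>N. ((\<lambda>\<mu>. deriv (\<lambda>\<nu>. xvec N (p \<nu>) k) \<mu>) \<longlongrightarrow> 0) at_top)"
proof -
  interpret perron_family N m p
    using hp by unfold_locales blast+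
  have "norm1 N (\<lambda>k. deriv (\<lambda>\<nu>. x \<nu> k) \<mu>) \<le> 2 * real N / (2 * \<mu> - K)" if "K < 2 * \<mu>" for \<mu>
  proof -
    have "2 / (2 * \<mu> - K) \<le> 2 * real N / (2 * \<mu> - K)"
      using N that by (intro divide_right_mono) auto
    then show ?thesis using norm1_deriv_x_le[OF that] by linarith
  qed
  then show ?thesis
    using norm1_x_minus_xhat_le x_differentiable x_tendsto_xhat deriv_x_tendsto_0 by auto
qed

end
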